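(* Let $(A,v)$, $(B,w)$ be valued abelian groups, $f:A\to B$ a group homomorphism, and $S\subseteq A$ a subset satisfying conditions (a), (b), (c) below, with $\varphi:v(S)\to w(B)$ the map from (a). Assume $(A,v)$ is spherically complete. Then for every $a\in A$ and every $\alpha\in v(S)$, $$f(B_\alpha(a))=B_{\varphi(\alpha)}(f(a)),$$ where the right-hand side is the ball in $(B,w)$. Conditions: (a) the assignment $vs\mapsto wf(s)$ ($s\in S$) defines a map $\varphi:v(S)\to w(B)$ (i.e. $vs=vs'\Rightarrow wf(s)=wf(s')$) which is order preserving ($vs<vs'\Rightarrow wf(s)<wf(s')$); (b) for all $a\in A$, $s\in S$: $va\ge vs\Rightarrow wf(a)\ge wf(s)$; (c) for every $b\in B\setminus\{0\}$ there is $s\in S$ with $w(b-f(s))>wb$.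
   Context: A valued abelian group $(A,v)$ is an abelian group $A$ with a map $v:A\to \Gamma\cup\{\infty\}$, $a\mapsto va$, onto a totally ordered set with largest element $\infty$, such that $va=\infty\iff a=0$ and $v(a-a')\ge\min\{va,va'\}$ for all $a,a'\in A$. For $X\subseteq A$ write $v(X)=\{vx\mid x\in X\}$. For $a\in A$ and $\alpha\in v(A)$ the ball is $B_\alpha(a)=\{a'\in A\mid v(a-a')\ge\alpha\}$. A nest of balls is a set of balls totally ordered by inclusion; $(A,v)$ is spherically complete if every nest of balls has nonempty intersection. *)

theory Defs
  imports Main
begin

text \<open>A valued abelian group: the group is the ambient type (class ab_group_add), the
value set Gamma + {infinity} is a linear order whose top element plays the role of infinity.\<close>

definition valued_ab_group :: "('a::ab_group_add \<Rightarrow> 'g::{linorder,order_top}) \<Rightarrow> bool" where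
  "valued_ab_group v \<longleftrightarrow>
     (\<forall>a. v a = top \<longleftrightarrow> a = 0) \<and> (\<forall>a a'. v (a - a') \<ge> min (v a) (v a'))"

definition vball :: "('a::ab_group_add \<Rightarrow> 'g::linorder) \<Rightarrow> 'g \<Rightarrow> 'a \<Rightarrow> 'a set" where
  "vball v \<alpha> a = {a'. v (a - a') \<ge> \<alpha>}"

definition is_ball :: "('a::ab_group_add \<Rightarrow> 'g::linorder) \<Rightarrow> 'a set \<Rightarrow> bool" where
  "is_ball v X \<longleftrightarrow> (\<exists>a \<alpha>. \<alpha> \<in> range v \<and> X = vball v \<alpha> a)"

definition nest_of_balls :: "('a::ab_group_add \<Rightarrow> 'g::linorder) \<Rightarrow> 'a set set \<Rightarrow> bool" where
  "nest_of_balls v N \<longleftrightarrow> (\<forall>X\<in>N. is_ball v X) \<and> (\<forall>X\<in>N. \<forall>Y\<in>N. X \<subseteq> Y \<or> Y \<subseteq> X)"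

definition spherically_complete :: "('a::ab_group_add \<Rightarrow> 'g::linorder) \<Rightarrow> bool" where
  "spherically_complete v \<longleftrightarrow> (\<forall>N. nest_of_balls v N \<longrightarrow> \<Inter>N \<noteq> {})"

end

theory Submission
  imports Defs HOL.Modules
begin

text \<open>Condition (b) says that \<open>f\<close> maps \<open>B_\<alpha>(a)\<close> into \<open>B_\<phi>(\<alpha>)(f a)\<close>. For the converse fix a
  target \<open>d\<close> and call a ball \<open>B_vt(x)\<close> with \<open>t \<in> S\<close> admissible if \<open>w(f t) \<le> w(d - f x)\<close>; by (b)
  every point of an admissible ball is again an admissible center of it. Take a maximal nest of
  admissible balls through \<open>B_\<alpha>(a)\<close> and, by spherical completeness, a point \<open>z\<close> of its
  intersection. If \<open>f z \<noteq> d\<close>, condition (c) yields \<open>t \<in> S\<close> with \<open>f(z + t)\<close> closer to \<open>d\<close>, and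
  applied once more at \<open>z + t\<close> an admissible ball that lies inside every member of the nest but
  misses \<open>z\<close>, contradicting maximality.\<close>

lemma valued_ab_group_zero: "valued_ab_group v \<Longrightarrow> v 0 = top"
  by (simp add: valued_ab_group_def)

lemma valued_ab_group_diff: "valued_ab_group v \<Longrightarrow> min (v a) (v b) \<le> v (a - b)"
  by (simp add: valued_ab_group_def)

lemma valued_ab_group_uminus:
  assumes "valued_ab_group v"
  shows "v (- a) = v a"
proof -
  have "v a \<le> v (- a)"
    using valued_ab_group_diff[OF assms, of 0 a] valued_ab_group_zero[OF assms] by simp
  moreover have "v (- a) \<le> v a"
    using valued_ab_group_diff[OF assms, of 0 "- a"] valued_ab_group_zero[OF assms] by simp
  ultimately show ?thesis by simp
qed

lemma valued_ab_group_add: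
  assumes "valued_ab_group v"
  shows "min (v a) (v b) \<le> v (a + b)"
  using valued_ab_group_diff[OF assms, of a "- b"] by (simp add: valued_ab_group_uminus[OF assms])

lemma valued_ab_group_add_ge:
  assumes "valued_ab_group v" and "\<gamma> \<le> v a" and "\<gamma> \<le> v b"
  shows "\<gamma> \<le> v (a + b)"
  using order_trans[OF min.boundedI[OF assms(2,3)] valued_ab_group_add[OF assms(1)]] .

lemma valued_ab_group_eq_if_less_diff:
  assumes "valued_ab_group v" and "v e < v (e - t)"
  shows "v t = v e"
proof -
  have "v e \<le> v t"
    using valued_ab_group_diff[OF assms(1), of e "e - t"] assms(2) by simp
  moreover have "v t \<le> v e"
    using valued_ab_group_add[OF assms(1), of t "e - t"] assms(2)
    by (auto simp: min_def split: if_splits)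
  ultimately show ?thesis by simp
qed

lemma vball_subset_vball:
  assumes "valued_ab_group v" and "\<alpha> \<le> \<beta>" and "\<alpha> \<le> v (x - y)"
  shows "vball v \<beta> y \<subseteq> vball v \<alpha> x"
proof
  fix u assume "u \<in> vball v \<beta> y"
  then have "\<alpha> \<le> v (y - u)" using assms(2) by (simp add: vball_def)
  then have "\<alpha> \<le> v ((x - y) + (y - u))"
    using valued_ab_group_add_ge[OF assms(1)] assms(3) by blast
  then show "u \<in> vball v \<alpha> x" by (simp add: vball_def)
qed

lemma maximal_nest_through:
  assumes "X\<^sub>0 \<in> F"
  obtains M where "M \<subseteq> F" and "X\<^sub>0 \<in> M" and "\<forall>X\<in>M. \<forall>Y\<in>M. X \<subseteq> Y \<or> Y \<subseteq> X"
    and "\<forall>X\<in>F. (\<forall>Y\<in>M. X \<subseteq> Y) \<longrightarrow> X \<in> M"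
proof -
  define F' where "F' = {X \<in> F. X \<subseteq> X\<^sub>0 \<or> X\<^sub>0 \<subseteq> X}"
  obtain M where M: "subset.maxchain F' M"
    using subset.Hausdorff by blast
  then have chain: "subset.chain F' M"
    by (rule subset.maxchain_imp_chain)
  have extend: "X \<in> M" if "subset.chain F' (insert X M)" for X
    using M that by (auto simp: subset.maxchain_def)
  have "X\<^sub>0 \<in> M"
    using chain assms by (intro extend) (auto simp: subset_chain_insert subset_chain_def F'_def)
  moreover have "\<forall>X\<in>F. (\<forall>Y\<in>M. X \<subseteq> Y) \<longrightarrow> X \<in> M"
    using chain \<open>X\<^sub>0 \<in> M\<close> by (auto intro!: extend simp: subset_chain_insert F'_def)
  ultimately show ?thesis
    using that chain by (auto simp: subset_chain_def F'_def)
qed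

locale approximating_set = additive f
  for v :: "'a::ab_group_add \<Rightarrow> 'g::{linorder,order_top}"
    and w :: "'b::ab_group_add \<Rightarrow> 'h::{linorder,order_top}"
    and f :: "'a \<Rightarrow> 'b" and S :: "'a set" +
  assumes valued_dom: "valued_ab_group v"
    and valued_codom: "valued_ab_group w"
    and value_mono: "s \<in> S \<Longrightarrow> s' \<in> S \<Longrightarrow> v s < v s' \<Longrightarrow> w (f s) < w (f s')"
    and value_bound: "s \<in> S \<Longrightarrow> v s \<le> v a \<Longrightarrow> w (f s) \<le> w (f a)"
    and approximates: "b \<noteq> 0 \<Longrightarrow> \<exists>s\<in>S. w b < w (b - f s)"
begin

lemma value_le_if_image_value_le:
  "s \<in> S \<Longrightarrow> t \<in> S \<Longrightarrow> w (f s) \<le> w (f t) \<Longrightarrow> v s \<le> v t"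
  using value_mono[of t s] by (meson leD leI)

lemma value_less_if_image_value_less:
  "s \<in> S \<Longrightarrow> t \<in> S \<Longrightarrow> w (f s) < w (f t) \<Longrightarrow> v s < v t"
  using value_bound[of t s] by (meson leD leI)

lemma image_vball_subset:
  assumes "s \<in> S"
  shows "f ` vball v (v s) a \<subseteq> vball w (w (f s)) (f a)"
  using value_bound[OF assms] by (auto simp: vball_def diff[symmetric])

lemma approximation_step:
  assumes "f z \<noteq> d"
  obtains t where "t \<in> S" and "w (f t) = w (d - f z)" and "w (d - f z) < w (d - f (z + t))"
proof -
  obtain t where t: "t \<in> S" "w (d - f z) < w (d - f z - f t)"
    using approximates[of "d - f z"] assms by auto
  moreover have "d - f z - f t = d - f (z + t)"
    by (simp add: add)
  ultimately show ?thesis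
    using that valued_ab_group_eq_if_less_diff[OF valued_codom t(2)] by simp
qed

lemma admissible_recenter:
  assumes "s \<in> S" and "w (f s) \<le> w (d - f x)" and "z \<in> vball v (v s) x"
  shows "w (f s) \<le> w (d - f z)"
proof -
  have "w (f s) \<le> w (f x - f z)"
    using assms(1,3) value_bound by (simp add: vball_def diff[symmetric])
  then have "w (f s) \<le> w ((d - f x) + (f x - f z))"
    using valued_ab_group_add_ge[OF valued_codom] assms(2) by blast
  then show ?thesis by simp
qed

lemma exists_preimage_in_admissible_vball:
  assumes sc: "spherically_complete v" and "s \<in> S" and "w (f s) \<le> w (d - f a)"
  shows "\<exists>x\<in>vball v (v s) a. f x = d"
proof -
  define F where "F = {vball v (v t) x | t x. t \<in> S \<and> w (f t) \<le> w (d - f x)}"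
  have "vball v (v s) a \<in> F"
    using assms by (auto simp: F_def)
  then obtain M where M: "M \<subseteq> F" "vball v (v s) a \<in> M"
      "\<forall>X\<in>M. \<forall>Y\<in>M. X \<subseteq> Y \<or> Y \<subseteq> X"
    and maximal: "\<forall>X\<in>F. (\<forall>Y\<in>M. X \<subseteq> Y) \<longrightarrow> X \<in> M"
    by (rule maximal_nest_through)
  have "nest_of_balls v M"
    unfolding nest_of_balls_def is_ball_def using M(1,3) unfolding F_def by blast
  with sc obtain z where z: "z \<in> \<Inter>M"
    unfolding spherically_complete_def by blast
  have below_nest: "vball v (v t) z \<subseteq> X" if "X \<in> M" "t \<in> S" "w (f t) = w (d - f z)" for X t
  proof -
    obtain s' x where X: "X = vball v (v s') x" "s' \<in> S" "w (f s') \<le> w (d - f x)"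
      using \<open>X \<in> M\<close> M(1) by (auto simp: F_def)
    have "z \<in> X" using z \<open>X \<in> M\<close> by blast
    then have "v s' \<le> v t"
      using admissible_recenter X that(2,3) by (metis value_le_if_image_value_le)
    moreover have "v s' \<le> v (x - z)"
      using \<open>z \<in> X\<close> X(1) by (simp add: vball_def)
    ultimately show ?thesis
      unfolding X(1) by (rule vball_subset_vball[OF valued_dom])
  qed
  show ?thesis
  proof (rule ccontr)
    assume no_preimage: "\<not> ?thesis"
    have "f z \<noteq> d" using z M(2) no_preimage by blast
    then obtain t where t: "t \<in> S" "w (f t) = w (d - f z)" "w (d - f z) < w (d - f (z + t))"
      by (rule approximation_step)
    have "z + t \<in> vball v (v t) z"
      by (simp add: vball_def valued_ab_group_uminus[OF valued_dom])
    then have "f (z + t) \<noteq> d"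
      using below_nest[OF M(2) t(1,2)] no_preimage by blast
    then obtain t' where t': "t' \<in> S" "w (f t') = w (d - f (z + t))"
      by (rule approximation_step)
    have "v t < v t'"
      using t(2,3) t'(2) by (intro value_less_if_image_value_less[OF t(1) t'(1)]) simp
    then have "vball v (v t') (z + t) \<subseteq> vball v (v t) z"
      by (intro vball_subset_vball[OF valued_dom])
        (auto simp: valued_ab_group_uminus[OF valued_dom])
    then have "\<forall>Y\<in>M. vball v (v t') (z + t) \<subseteq> Y"
      using below_nest[OF _ t(1,2)] by blast
    moreover have "vball v (v t') (z + t) \<in> F"
      using t' unfolding F_def by force
    ultimately have "vball v (v t') (z + t) \<in> M"
      using maximal by blast
    then have "v t' \<le> v t"
      using z by (auto simp: vball_def valued_ab_group_uminus[OF valued_dom])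
    with \<open>v t < v t'\<close> show False by simp
  qed
qed

lemma image_vball:
  assumes "spherically_complete v" and "s \<in> S"
  shows "f ` vball v (v s) a = vball w (w (f s)) (f a)"
proof
  show "f ` vball v (v s) a \<subseteq> vball w (w (f s)) (f a)"
    using assms(2) by (rule image_vball_subset)
  show "vball w (w (f s)) (f a) \<subseteq> f ` vball v (v s) a"
  proof
    fix y assume "y \<in> vball w (w (f s)) (f a)"
    then have "w (f s) \<le> w (y - f a)"
      by (simp add: vball_def valued_ab_group_uminus[OF valued_codom, of "y - f a", symmetric])
    then show "y \<in> f ` vball v (v s) a"
      using exists_preimage_in_admissible_vball[OF assms] by blast
  qed
qed

end

theorem mainTheorem2:
  fixes v :: "'a::ab_group_add \<Rightarrow> 'g::{linorder,order_top}"
    and w :: "'b::ab_group_add \<Rightarrow> 'h::{linorder,order_top}"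
    and f :: "'a \<Rightarrow> 'b" and S :: "'a set" and \<phi> :: "'g \<Rightarrow> 'h"
  assumes vA: "valued_ab_group v"
    and wB: "valued_ab_group w"
    and hom: "\<forall>x y. f (x + y) = f x + f y"
    and a_welldef: "\<forall>s\<in>S. \<forall>s'\<in>S. v s = v s' \<longrightarrow> w (f s) = w (f s')"
    and a_phi: "\<forall>s\<in>S. \<phi> (v s) = w (f s)"
    and a_mono: "\<forall>s\<in>S. \<forall>s'\<in>S. v s < v s' \<longrightarrow> w (f s) < w (f s')"
    and b: "\<forall>a. \<forall>s\<in>S. v a \<ge> v s \<longrightarrow> w (f a) \<ge> w (f s)"
    and c: "\<forall>b. b \<noteq> 0 \<longrightarrow> (\<exists>s\<in>S. w (b - f s) > w b)"
    and sc: "spherically_complete v"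
  shows "\<forall>a. \<forall>\<alpha>\<in>v ` S. f ` vball v \<alpha> a = vball w (\<phi> \<alpha>) (f a)"
proof -
  interpret approximating_set v w f S
    using vA wB hom a_mono b c by unfold_locales auto
  show ?thesis
    using image_vball[OF sc] a_phi by auto
qed

end
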